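(* Let $\mathbb{F}$ be a field, $F\in M$ a non-zero inverse form, $(f,g)$ a viable ordered pair for $\mathcal{I}_F$, and $\Theta=\{\theta\in\mathcal{I}_F\cap\mathcal{L}: |\theta| \text{ is minimal}\}$. Then $\Theta=\{f\}$ if $|g|>|f|$, and otherwise $$\Theta=\{f\}\cup\{f+\psi g:\ \psi\in R \text{ a form with } |\psi|=|f|-|g|\}.$$
   Context: $R=\mathbb{F}[x,z]$, $M=\mathbb{F}[x^{-1},z^{-1}]$ with $R$-module structure $x^pz^q\circ x^{-u}z^{-v}=x^{p-u}z^{q-v}$ if $p\le u,q\le v$ and $0$ otherwise, extended bilinearly. An inverse form is a homogeneous element of $M$; $|\cdot|$ is total degree. $\mathcal{I}_F=\{\varphi\in R:\varphi\circ F=0\}$. $\mathcal{L}$ is the set of non-zero forms $\varphi\in R$ whose coefficient of $x^{|\varphi|}$ equals $1$. A viable ordered pair (VOP) for $\mathcal{I}_F$ is a pair $(f,g)$ of non-zero monic forms with $f\in\mathcal{L}$, $z\mid g$, $\mathcal{I}_F=\langle f,g\rangle$ and $|f|+|g|=2-|F|$. *)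

theory Defs
  imports "HOL-Library.Poly_Mapping" "HOL-Library.Product_Plus"
begin

text \<open>R = F[x,z]: a polynomial is a finitely supported map from exponent pairs (p,q)
  (standing for x^p z^q) to coefficients.  M = F[x^-1,z^-1]: an element is a finitely
  supported map from pairs (u,v) (standing for x^-u z^-v) to coefficients.\<close>

type_synonym 'a bipoly = "(nat \<times> nat) \<Rightarrow>\<^sub>0 'a"

definition xvar :: "'a::comm_ring_1 bipoly" where
  "xvar = Poly_Mapping.single (1, 0) 1"

definition zvar :: "'a::comm_ring_1 bipoly" where
  "zvar = Poly_Mapping.single (0, 1) 1"

text \<open>A (non-zero) form: a non-zero homogeneous element (all monomials of equal total degree).
  The same predicate is used for inverse forms in M.\<close>
definition is_form :: "'a::zero bipoly \<Rightarrow> bool" where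
  "is_form \<phi> \<longleftrightarrow> \<phi> \<noteq> 0 \<and> (\<exists>d. \<forall>k\<in>Poly_Mapping.keys \<phi>. fst k + snd k = d)"

definition fdeg :: "'a::zero bipoly \<Rightarrow> nat" where
  "fdeg \<phi> = Max ((\<lambda>k. fst k + snd k) ` Poly_Mapping.keys \<phi>)"

definition ideg :: "'a::zero bipoly \<Rightarrow> int" where
  "ideg F = - int (fdeg F)"

text \<open>The module action of R on M: coefficient of x^-a z^-b in phi o F.\<close>
definition contract :: "'a::comm_ring_1 bipoly \<Rightarrow> 'a bipoly \<Rightarrow> nat \<times> nat \<Rightarrow> 'a" where
  "contract \<phi> F = (\<lambda>(a, b). \<Sum>k\<in>Poly_Mapping.keys \<phi>. Poly_Mapping.lookup \<phi> k * Poly_Mapping.lookup F (a + fst k, b + snd k))"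

definition annihilator :: "'a::comm_ring_1 bipoly \<Rightarrow> 'a bipoly set" where
  "annihilator F = {\<phi>. contract \<phi> F = (\<lambda>_. 0)}"

definition Lset :: "'a::comm_ring_1 bipoly set" where
  "Lset = {\<phi>. is_form \<phi> \<and> Poly_Mapping.lookup \<phi> (fdeg \<phi>, 0) = 1}"

definition ideal2 :: "'a::comm_ring_1 bipoly \<Rightarrow> 'a bipoly \<Rightarrow> 'a bipoly set" where
  "ideal2 f g = {a * f + b * g | a b. True}"

text \<open>Monic form: leading coefficient 1 w.r.t. the lexicographic order with x > z, i.e. the
  coefficient of the monomial with the largest x-exponent is 1.\<close>
definition monic_form :: "'a::comm_ring_1 bipoly \<Rightarrow> bool" where
  "monic_form \<phi> \<longleftrightarrow> is_form \<phi> \<and>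
     (let m = Max (fst ` Poly_Mapping.keys \<phi>) in Poly_Mapping.lookup \<phi> (m, fdeg \<phi> - m) = 1)"

definition VOP :: "'a::comm_ring_1 bipoly \<Rightarrow> 'a bipoly \<Rightarrow> 'a bipoly \<Rightarrow> bool" where
  "VOP F f g \<longleftrightarrow> monic_form f \<and> monic_form g \<and> f \<in> Lset \<and> zvar dvd g \<and>
     annihilator F = ideal2 f g \<and> int (fdeg f) + int (fdeg g) = 2 - ideg F"

definition Theta :: "'a::comm_ring_1 bipoly \<Rightarrow> 'a bipoly set" where
  "Theta F = {\<theta> \<in> annihilator F \<inter> Lset.
               \<forall>\<theta>' \<in> annihilator F \<inter> Lset. fdeg \<theta> \<le> fdeg \<theta>'}"

end

theory Submission
  imports Defs
begin

text \<open>Write \<open>\<theta> = a f + b g\<close> and compare homogeneous components of degree \<open>|\<theta>|\<close>: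
  \<open>\<theta> = a\<^sub>i f + b\<^sub>j g\<close> with \<open>a\<^sub>i, b\<^sub>j\<close> the components of degrees \<open>i = |\<theta>| - |f|\<close> and
  \<open>j = |\<theta>| - |g|\<close> (absent when negative).  Since \<open>z\<close> divides \<open>g\<close>, the coefficient
  of \<open>x\<^bsup>|\<theta>|\<^esup>\<close> in \<open>\<theta>\<close>, which is \<open>1\<close>, comes from \<open>a\<^sub>i f\<close> alone.  Hence \<open>|\<theta>| \<ge> |f|\<close>, and if
  \<open>|\<theta>| = |f|\<close> then \<open>a\<^sub>0 = 1\<close>, so \<open>\<theta> = f + b\<^sub>j g\<close>.\<close>

abbreviation tdeg :: "nat \<times> nat \<Rightarrow> nat" where
  "tdeg k \<equiv> fst k + snd k"

lemma tdeg_add: "tdeg (a + b) = tdeg a + tdeg b"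
  by (simp add: fst_add snd_add)

lemma tdeg_keys_form:
  assumes "is_form \<phi>" "k \<in> Poly_Mapping.keys \<phi>"
  shows "tdeg k = fdeg \<phi>"
proof -
  from assms(1) obtain d where d: "\<forall>k\<in>Poly_Mapping.keys \<phi>. tdeg k = d"
    unfolding is_form_def by blast
  then have "(\<lambda>k. tdeg k) ` Poly_Mapping.keys \<phi> = {d}"
    using assms(2) by (auto simp: image_iff)
  then show ?thesis
    using d assms(2) unfolding fdeg_def by simp
qed

lemma is_form_fdegI:
  assumes "\<phi> \<noteq> 0" "\<forall>k\<in>Poly_Mapping.keys \<phi>. tdeg k = d"
  shows "is_form \<phi> \<and> fdeg \<phi> = d"
proof -
  obtain k where "k \<in> Poly_Mapping.keys \<phi>"
    using assms(1) by (metis keys_eq_empty ex_in_conv)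
  then have "(\<lambda>k. tdeg k) ` Poly_Mapping.keys \<phi> = {d}"
    using assms(2) by (auto simp: image_iff)
  then show ?thesis
    using assms unfolding is_form_def fdeg_def by auto
qed

lemma tdeg_keys_mult:
  fixes p q :: "'a::comm_ring_1 bipoly"
  assumes "\<forall>a\<in>Poly_Mapping.keys p. tdeg a = i" "\<forall>b\<in>Poly_Mapping.keys q. tdeg b = j"
    and "k \<in> Poly_Mapping.keys (p * q)"
  shows "tdeg k = i + j"
  using keys_mult[of p q] assms tdeg_add by fastforce

lemma lookup_x_pow_eq_0_if_zvar_dvd:
  fixes g :: "'a::comm_ring_1 bipoly"
  assumes "zvar dvd g"
  shows "Poly_Mapping.lookup g (n, 0) = 0"
proof -
  obtain h where g: "g = zvar * h"
    using assms by (auto elim: dvdE)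
  have "(n, 0) \<notin> Poly_Mapping.keys (zvar * h)"
  proof
    assume "(n, 0) \<in> Poly_Mapping.keys (zvar * h)"
    then obtain b :: "nat \<times> nat" where "(n, 0) = (0, 1) + b"
      using keys_mult[of zvar h] by (auto simp: zvar_def)
    then have "(0::nat) = 1 + snd b"
      by (metis snd_add snd_conv)
    then show False
      by simp
  qed
  then show ?thesis
    using g by (simp add: in_keys_iff)
qed

definition homog_comp :: "nat \<Rightarrow> 'a::zero bipoly \<Rightarrow> 'a bipoly" where
  "homog_comp j p = Poly_Mapping.mapp (\<lambda>k v. if tdeg k = j then v else 0) p"

lemma lookup_homog_comp:
  "Poly_Mapping.lookup (homog_comp j p) k = (if tdeg k = j then Poly_Mapping.lookup p k else 0)"
  unfolding homog_comp_def lookup_mapp by (auto simp: when_def in_keys_iff)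

lemma tdeg_keys_homog_comp: "k \<in> Poly_Mapping.keys (homog_comp j p) \<Longrightarrow> tdeg k = j"
  by (auto simp: in_keys_iff lookup_homog_comp split: if_splits)

lemma homog_comp_add:
  "homog_comp j (p + q) = homog_comp j p + homog_comp j (q :: 'a::monoid_add bipoly)"
  by (rule poly_mapping_eqI) (simp add: lookup_homog_comp lookup_add)

lemma homog_comp_fdeg_form:
  assumes "is_form \<phi>"
  shows "homog_comp (fdeg \<phi>) \<phi> = \<phi>"
  by (rule poly_mapping_eqI)
    (metis lookup_homog_comp in_keys_iff tdeg_keys_form[OF assms])

lemma is_form_homog_comp:
  "homog_comp j p \<noteq> 0 \<Longrightarrow> is_form (homog_comp j p) \<and> fdeg (homog_comp j p) = j"
  using is_form_fdegI tdeg_keys_homog_comp by blast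

lemma homog_comp_0: "homog_comp 0 p = Poly_Mapping.single 0 (Poly_Mapping.lookup p 0)"
  by (rule poly_mapping_eqI)
    (auto simp: lookup_homog_comp lookup_single when_def zero_prod_def)

lemma homog_comp_mult_form:
  fixes p f :: "'a::comm_ring_1 bipoly"
  assumes f: "is_form f"
  shows "homog_comp N (p * f) = (if fdeg f \<le> N then homog_comp (N - fdeg f) p * f else 0)"
proof -
  have deg_keys: "\<exists>a\<in>Poly_Mapping.keys q. tdeg k = tdeg a + fdeg f"
    if k: "k \<in> Poly_Mapping.keys (q * f)" for k and q :: "'a bipoly"
  proof -
    obtain a b where "a \<in> Poly_Mapping.keys q" "b \<in> Poly_Mapping.keys f" "k = a + b"
      using k keys_mult[of q f] by blast
    then show ?thesis
      using tdeg_add tdeg_keys_form[OF f] by metis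
  qed
  show ?thesis
  proof (cases "fdeg f \<le> N")
    case True
    define j where "j = N - fdeg f"
    have "Poly_Mapping.lookup (homog_comp N (p * f)) k = Poly_Mapping.lookup (homog_comp j p * f) k"
      for k
    proof (cases "tdeg k = N")
      case True
      have "Poly_Mapping.lookup ((p - homog_comp j p) * f) k = 0"
      proof (rule ccontr)
        assume "Poly_Mapping.lookup ((p - homog_comp j p) * f) k \<noteq> 0"
        then obtain a where a: "a \<in> Poly_Mapping.keys (p - homog_comp j p)" "tdeg k = tdeg a + fdeg f"
          using deg_keys by (meson in_keys_iff)
        then have "tdeg a = j"
          using True j_def by simp
        with a(1) show False
          by (simp add: in_keys_iff lookup_minus lookup_homog_comp)
      qed
      moreover have "p * f = homog_comp j p * f + (p - homog_comp j p) * f"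
        by (simp add: algebra_simps)
      ultimately show ?thesis
        using True by (metis add.right_neutral lookup_add lookup_homog_comp)
    next
      case False
      have "k \<notin> Poly_Mapping.keys (homog_comp j p * f)"
        using deg_keys[of k "homog_comp j p"] tdeg_keys_homog_comp False \<open>fdeg f \<le> N\<close> j_def
        by force
      then show ?thesis
        using False by (simp add: lookup_homog_comp in_keys_iff)
    qed
    then show ?thesis
      using True j_def by (simp add: poly_mapping_eqI)
  next
    case False
    have "Poly_Mapping.lookup (homog_comp N (p * f)) k = 0" for k
      using deg_keys[of k p] False by (force simp: lookup_homog_comp in_keys_iff)
    then show ?thesis
      using False by (simp add: poly_mapping_eqI)
  qed
qed

lemma lookup_single_0_mult:
  "Poly_Mapping.lookup (Poly_Mapping.single 0 c * p) k = c * Poly_Mapping.lookup (p :: 'a::comm_ring_1 bipoly) k"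
  by (simp add: mult_map_scale_conv_mult[symmetric] map.rep_eq when_def)

lemma form_eq_homog_comp_combination:
  fixes f g \<theta> a b :: "'a::comm_ring_1 bipoly"
  assumes "is_form f" "is_form g" "is_form \<theta>" "\<theta> = a * f + b * g"
  shows "\<theta> = (if fdeg f \<le> fdeg \<theta> then homog_comp (fdeg \<theta> - fdeg f) a * f else 0)
           + (if fdeg g \<le> fdeg \<theta> then homog_comp (fdeg \<theta> - fdeg g) b * g else 0)"
proof -
  have "\<theta> = homog_comp (fdeg \<theta>) (a * f + b * g)"
    using homog_comp_fdeg_form[OF assms(3)] assms(4) by simp
  then show ?thesis
    by (simp only: homog_comp_add homog_comp_mult_form[OF assms(1)] homog_comp_mult_form[OF assms(2)])
qed

lemma fdeg_le_fdeg_ideal2_Lset: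
  fixes f g \<theta> :: "'a::comm_ring_1 bipoly"
  assumes f: "f \<in> Lset" and g: "is_form g" "zvar dvd g" and \<theta>: "\<theta> \<in> ideal2 f g \<inter> Lset"
  shows "fdeg f \<le> fdeg \<theta>"
proof (rule ccontr)
  assume lt: "\<not> fdeg f \<le> fdeg \<theta>"
  obtain a b where "\<theta> = a * f + b * g"
    using \<theta> unfolding ideal2_def by blast
  then have "\<theta> = (if fdeg g \<le> fdeg \<theta> then homog_comp (fdeg \<theta> - fdeg g) b * g else 0)"
    using form_eq_homog_comp_combination[of f g \<theta> a b] f g \<theta> lt by (simp add: Lset_def)
  then have "Poly_Mapping.lookup \<theta> (fdeg \<theta>, 0) = 0"
    using lookup_x_pow_eq_0_if_zvar_dvd dvd_mult[OF g(2)] by (metis lookup_zero)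
  with \<theta> show False
    by (simp add: Lset_def)
qed

lemma ideal2_Lset_fdeg_eq_cases:
  fixes f g \<theta> :: "'a::comm_ring_1 bipoly"
  assumes f: "f \<in> Lset" and g: "is_form g" "zvar dvd g" and \<theta>: "\<theta> \<in> ideal2 f g \<inter> Lset"
    and deg: "fdeg \<theta> = fdeg f"
  shows "\<theta> = f \<or> (fdeg g \<le> fdeg f \<and> (\<exists>\<psi>. is_form \<psi> \<and> fdeg \<psi> = fdeg f - fdeg g \<and> \<theta> = f + \<psi> * g))"
proof -
  obtain a b where ab: "\<theta> = a * f + b * g"
    using \<theta> unfolding ideal2_def by blast
  define \<psi> where "\<psi> = homog_comp (fdeg f - fdeg g) b"
  define G where "G = (if fdeg g \<le> fdeg f then \<psi> * g else 0)"
  have "is_form f" "is_form \<theta>"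
    using f \<theta> by (auto simp: Lset_def)
  from form_eq_homog_comp_combination[OF this(1) g(1) this(2) ab]
  have \<theta>_eq: "\<theta> = Poly_Mapping.single 0 (Poly_Mapping.lookup a 0) * f + G"
    unfolding deg by (simp add: homog_comp_0 G_def \<psi>_def)
  have "Poly_Mapping.lookup G (fdeg f, 0) = 0"
    unfolding G_def by (simp add: lookup_x_pow_eq_0_if_zvar_dvd dvd_mult[OF g(2)])
  then have "Poly_Mapping.lookup \<theta> (fdeg f, 0) = Poly_Mapping.lookup a 0"
    using f unfolding \<theta>_eq by (simp add: lookup_add lookup_single_0_mult Lset_def)
  then have "Poly_Mapping.lookup a 0 = 1"
    using \<theta> deg by (simp add: Lset_def)
  then have \<theta>_f: "\<theta> = f + G"
    using \<theta>_eq by simp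
  show ?thesis
  proof (cases "fdeg g \<le> fdeg f \<and> \<psi> \<noteq> 0")
    case True
    then show ?thesis
      using is_form_homog_comp[of "fdeg f - fdeg g" b] \<theta>_f unfolding G_def \<psi>_def by auto
  next
    case False
    then show ?thesis
      using \<theta>_f unfolding G_def by auto
  qed
qed

lemma Lset_add_mult_zvar_dvd:
  fixes f g \<psi> :: "'a::comm_ring_1 bipoly"
  assumes f: "f \<in> Lset" and g: "is_form g" "zvar dvd g"
    and \<psi>: "is_form \<psi>" "fdeg \<psi> + fdeg g = fdeg f"
  shows "f + \<psi> * g \<in> Lset \<and> fdeg (f + \<psi> * g) = fdeg f"
proof -
  have x_coeff: "Poly_Mapping.lookup (f + \<psi> * g) (fdeg f, 0) = 1"
    using f by (simp add: lookup_add Lset_def lookup_x_pow_eq_0_if_zvar_dvd dvd_mult[OF g(2)])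
  then have "f + \<psi> * g \<noteq> 0"
    by auto
  moreover have "\<forall>k\<in>Poly_Mapping.keys (f + \<psi> * g). tdeg k = fdeg f"
  proof
    fix k
    assume "k \<in> Poly_Mapping.keys (f + \<psi> * g)"
    then consider "k \<in> Poly_Mapping.keys f" | "k \<in> Poly_Mapping.keys (\<psi> * g)"
      using keys_add[of f "\<psi> * g"] by blast
    then show "tdeg k = fdeg f"
    proof cases
      case 1
      then show ?thesis
        using f tdeg_keys_form unfolding Lset_def by blast
    next
      case 2
      have "tdeg k = fdeg \<psi> + fdeg g"
        by (rule tdeg_keys_mult[OF _ _ 2]) (simp_all add: tdeg_keys_form \<psi>(1) g(1))
      then show ?thesis
        using \<psi>(2) by simp
    qed
  qed
  ultimately have "is_form (f + \<psi> * g) \<and> fdeg (f + \<psi> * g) = fdeg f"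
    by (rule is_form_fdegI)
  then show ?thesis
    using x_coeff unfolding Lset_def by simp
qed

lemma ideal2_add_mult: "f + \<psi> * g \<in> ideal2 f g"
  unfolding ideal2_def by (intro CollectI exI[of _ 1] exI[of _ \<psi>]) simp

lemma Theta_eq_least_fdeg:
  assumes "annihilator F = I" "f \<in> I \<inter> Lset" "\<forall>\<theta>\<in>I \<inter> Lset. fdeg f \<le> fdeg \<theta>"
  shows "Theta F = {\<theta> \<in> I \<inter> Lset. fdeg \<theta> = fdeg f}"
  using assms unfolding Theta_def by (auto intro: le_antisym)

lemma least_fdeg_ideal2_Lset:
  fixes f g :: "'a::comm_ring_1 bipoly"
  assumes f: "f \<in> Lset" and g: "is_form g" "zvar dvd g"
  shows "{\<theta> \<in> ideal2 f g \<inter> Lset. fdeg \<theta> = fdeg f} =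
           {f} \<union> {f + \<psi> * g | \<psi>. is_form \<psi> \<and> fdeg \<psi> = fdeg f - fdeg g \<and> fdeg g \<le> fdeg f}"
proof (intro equalityI subsetI)
  fix \<theta>
  assume "\<theta> \<in> {\<theta> \<in> ideal2 f g \<inter> Lset. fdeg \<theta> = fdeg f}"
  then show "\<theta> \<in> {f} \<union> {f + \<psi> * g | \<psi>. is_form \<psi> \<and> fdeg \<psi> = fdeg f - fdeg g \<and> fdeg g \<le> fdeg f}"
    using ideal2_Lset_fdeg_eq_cases[OF f g] by blast
next
  fix \<theta>
  assume "\<theta> \<in> {f} \<union> {f + \<psi> * g | \<psi>. is_form \<psi> \<and> fdeg \<psi> = fdeg f - fdeg g \<and> fdeg g \<le> fdeg f}"
  then consider "\<theta> = f"
    | \<psi> where "is_form \<psi>" "fdeg \<psi> + fdeg g = fdeg f" "\<theta> = f + \<psi> * g"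
    by fastforce
  then show "\<theta> \<in> {\<theta> \<in> ideal2 f g \<inter> Lset. fdeg \<theta> = fdeg f}"
  proof cases
    case 1
    then show ?thesis
      using f ideal2_add_mult[of f 0 g] by simp
  next
    case 2
    then show ?thesis
      using Lset_add_mult_zvar_dvd[OF f g] ideal2_add_mult by simp
  qed
qed

theorem corollary3:
  fixes F f g :: "'a::field bipoly"
  assumes "is_form F"
    and "VOP F f g"
  shows "(fdeg g > fdeg f \<longrightarrow> Theta F = {f}) \<and>
         (\<not> fdeg g > fdeg f \<longrightarrow>
            Theta F = {f} \<union> {f + \<psi> * g | \<psi>. is_form \<psi> \<and> fdeg \<psi> = fdeg f - fdeg g})"
proof -
  have f: "f \<in> Lset" and g: "is_form g" "zvar dvd g" and I: "annihilator F = ideal2 f g"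
    using assms(2) unfolding VOP_def monic_form_def by auto
  have "f \<in> ideal2 f g"
    using ideal2_add_mult[of f 0 g] by simp
  then have "Theta F = {\<theta> \<in> ideal2 f g \<inter> Lset. fdeg \<theta> = fdeg f}"
    using Theta_eq_least_fdeg[OF I] fdeg_le_fdeg_ideal2_Lset[OF f g] f by blast
  also have "\<dots> = {f} \<union> {f + \<psi> * g | \<psi>. is_form \<psi> \<and> fdeg \<psi> = fdeg f - fdeg g \<and> fdeg g \<le> fdeg f}"
    by (rule least_fdeg_ideal2_Lset[OF f g])
  finally show ?thesis
    by (simp add: not_less)
qed

end
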